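(* For every list (of any length $l$, in any initial order) and every request sequence $\sigma$ of length $n$, there is a deterministic online algorithm with advice that serves $\sigma$ at cost exactly $\mathrm{OPT}(\sigma)$ while reading at most $\mathrm{OPT}(\sigma)-n$ bits of advice, where costs are measured in the full cost model.
   Context: Static list update problem: a list contains $l$ distinct items in some initial order; a request sequence $\sigma=\langle\sigma_1,\dots,\sigma_n\rangle$ of items of the list must be served in order (online: when serving $\sigma_t$ the algorithm does not know $\sigma_{t+1},\dots$). Serving a request to the item currently at position $i$ (positions $1,\dots,l$ from the front) costs $i$ in the full cost model and $i-1$ in the partial cost model. Immediately after an access, the accessed item may be moved to any position closer to the front at no cost (free exchange); at any time, two adjacent items may be swapped at cost $1$ (paid exchange). For an algorithm $A$, $A(\sigma)$ denotes its total cost on $\sigma$, and $\mathrm{OPT}(\sigma)$ denotes the minimum total cost of any offline algorithm (knowing $\sigma$ in advance) serving $\sigma$ from the same initial list. Advice model: before serving, a benevolent oracle that knows the whole sequence $\sigma$ writes an infinite binary string (the advice tape); the online algorithm may read bits from the tape at any time. The number of advice bits read on $\sigma$ is the length of the shortest prefix of the tape containing all bits accessed. *)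

theory Defs
  imports Main
begin

(* Lists are modelled as distinct HOL lists; index 0 is the front. *)

(* 0-based position of item x in list L (meaningful when x occurs in L) *)
definition pos :: "'a list \<Rightarrow> 'a \<Rightarrow> nat" where
  "pos L x = (LEAST i. i < length L \<and> L ! i = x)"

(* paid exchange: swap the adjacent items at 0-based positions i and i+1 *)
definition swap_adj :: "nat \<Rightarrow> 'a list \<Rightarrow> 'a list" where
  "swap_adj i L = L[i := L ! Suc i, Suc i := L ! i]"

definition swaps :: "nat list \<Rightarrow> 'a list \<Rightarrow> 'a list" where
  "swaps ps L = fold swap_adj ps L"

(* free exchange: move item x to 0-based position j *)
definition move_to :: "nat \<Rightarrow> 'a \<Rightarrow> 'a list \<Rightarrow> 'a list" where
  "move_to j x L = (let ys = remove1 x L in take j ys @ x # drop j ys)"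

(* An action for one request: a list of paid exchanges performed before the
   access, and the (0-based) target position of the free exchange performed
   immediately after the access. *)
type_synonym action = "nat list \<times> nat"

definition valid_action :: "'a list \<Rightarrow> 'a \<Rightarrow> action \<Rightarrow> bool" where
  "valid_action L x a \<longleftrightarrow>
     (\<forall>i\<in>set (fst a). Suc i < length L) \<and> snd a \<le> pos (swaps (fst a) L) x"

definition step_state :: "'a list \<Rightarrow> 'a \<Rightarrow> action \<Rightarrow> 'a list" where
  "step_state L x a = move_to (snd a) x (swaps (fst a) L)"

(* full cost model: access to position i (1-based) costs i; each paid exchange costs 1 *)
definition step_cost :: "'a list \<Rightarrow> 'a \<Rightarrow> action \<Rightarrow> nat" where
  "step_cost L x a = length (fst a) + (pos (swaps (fst a) L) x + 1)"

fun valid_run :: "'a list \<Rightarrow> 'a list \<Rightarrow> action list \<Rightarrow> bool" where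
  "valid_run L [] [] = True"
| "valid_run L (x # xs) (a # as) = (valid_action L x a \<and> valid_run (step_state L x a) xs as)"
| "valid_run L _ _ = False"

fun run_cost :: "'a list \<Rightarrow> 'a list \<Rightarrow> action list \<Rightarrow> nat" where
  "run_cost L (x # xs) (a # as) = step_cost L x a + run_cost (step_state L x a) xs as"
| "run_cost L _ _ = 0"

definition OPT :: "'a list \<Rightarrow> 'a list \<Rightarrow> nat" where
  "OPT L \<sigma> = (LEAST c. \<exists>as. valid_run L \<sigma> as \<and> run_cost L \<sigma> as = c)"

(* A deterministic online algorithm with advice: given the initial list, the
   requests revealed so far (the last one being the current request) and the
   advice tape, it chooses the action for the current request. *)
type_synonym 'a advice_alg = "'a list \<Rightarrow> 'a list \<Rightarrow> (nat \<Rightarrow> bool) \<Rightarrow> action"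

definition alg_actions :: "'a advice_alg \<Rightarrow> 'a list \<Rightarrow> 'a list \<Rightarrow> (nat \<Rightarrow> bool) \<Rightarrow> action list" where
  "alg_actions A L \<sigma> w = map (\<lambda>t. A L (take (Suc t) \<sigma>) w) [0..<length \<sigma>]"

(* On input \<sigma> with tape w, A reads at most b advice bits: its behaviour is
   determined by the first b bits of the tape. *)
definition reads_at_most :: "'a advice_alg \<Rightarrow> 'a list \<Rightarrow> 'a list \<Rightarrow> (nat \<Rightarrow> bool) \<Rightarrow> nat \<Rightarrow> bool" where
  "reads_at_most A L \<sigma> w b \<longleftrightarrow>
     (\<forall>w'. (\<forall>i<b. w' i = w i) \<longrightarrow> alg_actions A L \<sigma> w' = alg_actions A L \<sigma> w)"

end

theory Submission
  imports Defs "HOL-Library.Product_Lexorder"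
begin

text \<open>
  On a request to x at position p of the current list, the algorithm reads p advice bits, one
  for each item ahead of x, saying whether that item should end up behind x. It rearranges the
  list accordingly, using exactly as many paid exchanges as the rearrangement has inversions,
  and accesses x without a free exchange. Every item ahead of x either stays ahead of it or
  becomes an inversion, so the request costs at least p + 1 and at most cost - 1 bits are read.

  Any run through lists M_1, ..., M_n costs at least the sum of inv(M_(t-1), M_t) + pos(M_t, x_t) + 1,
  since a paid exchange creates at most one inversion and a free exchange moving x by d places
  at most d. Take an optimal run and let the advice say, for each item ahead of x_t, whether it
  lies behind x_t in M_t. The rearranged list T_t then lies between the algorithm's list N and
  M_t, i.e. inv(N, T_t) + inv(T_t, M_t) <= inv(N, M_t), and has x_t no further back than M_t;
  by the triangle inequality for inversion counts the algorithm's sum is at most the optimal one.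
\<close>

lemma pos_less_length_nth_pos:
  assumes "x \<in> set K"
  shows "pos K x < length K \<and> K ! pos K x = x"
proof -
  obtain i where "i < length K" "K ! i = x" using assms by (auto simp: in_set_conv_nth)
  then show ?thesis unfolding pos_def by (rule LeastI[of "\<lambda>i. i < length K \<and> K ! i = x", OF conjI])
qed

lemma pos_less_length: "x \<in> set K \<Longrightarrow> pos K x < length K"
  using pos_less_length_nth_pos[of x K] by simp

lemma nth_pos [simp]: "x \<in> set K \<Longrightarrow> K ! pos K x = x"
  using pos_less_length_nth_pos[of x K] by simp

lemma pos_nth [simp]: "distinct K \<Longrightarrow> i < length K \<Longrightarrow> pos K (K ! i) = i"
  unfolding pos_def by (rule Least_equality) (auto simp: nth_eq_iff_index_eq)

lemma pos_eq_iff: "x \<in> set K \<Longrightarrow> y \<in> set K \<Longrightarrow> pos K x = pos K y \<longleftrightarrow> x = y"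
  by (metis nth_pos)

lemma pos_less_or_greater:
  "x \<in> set K \<Longrightarrow> y \<in> set K \<Longrightarrow> x \<noteq> y \<Longrightarrow> pos K x < pos K y \<or> pos K y < pos K x"
  using pos_eq_iff linorder_neqE_nat by metis

lemma pos_append_Cons: "x \<notin> set us \<Longrightarrow> pos (us @ x # vs) x = length us"
  unfolding pos_def by (rule Least_equality) (auto simp: nth_append split: if_split_asm intro: leI dest: nth_mem)

lemma card_pos_less:
  assumes "distinct K" "x \<in> set K"
  shows "card {y \<in> set K. pos K y < pos K x} = pos K x"
proof -
  have "{y \<in> set K. pos K y < pos K x} = (!) K ` {..<pos K x}"
    using pos_less_length[OF assms(2)] assms(1)
    by (force intro: image_eqI[where x="pos K _"])
  moreover have "inj_on ((!) K) {..<pos K x}"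
    using assms pos_less_length[OF assms(2)] by (auto simp: inj_on_def nth_eq_iff_index_eq)
  ultimately show ?thesis by (simp add: card_image)
qed

definition inversions :: "'a list \<Rightarrow> 'a list \<Rightarrow> ('a \<times> 'a) set" where
  "inversions K M = {(y, z). y \<in> set K \<and> z \<in> set K \<and> pos K y < pos K z \<and> pos M z < pos M y}"

definition ninv :: "'a list \<Rightarrow> 'a list \<Rightarrow> nat" where
  "ninv K M = card (inversions K M)"

lemma finite_inversions [simp]: "finite (inversions K M)"
  by (rule finite_subset[of _ "set K \<times> set K"]) (auto simp: inversions_def)

lemma inversions_self [simp]: "inversions K K = {}"
  by (auto simp: inversions_def)

lemma ninv_commute:
  assumes "set M = set K"
  shows "ninv K M = ninv M K"
proof -
  have "inversions M K = prod.swap ` inversions K M"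
  proof (rule set_eqI)
    fix p :: "'a \<times> 'a"
    show "p \<in> inversions M K \<longleftrightarrow> p \<in> prod.swap ` inversions K M"
      using assms by (cases p) (auto simp: inversions_def image_iff)
  qed
  then show ?thesis unfolding ninv_def by (simp add: card_image)
qed

lemma ninv_triangle:
  assumes "set B = set A" "set C = set A"
  shows "ninv A C \<le> ninv A B + ninv B C"
proof -
  have "inversions A C \<subseteq> inversions A B \<union> inversions B C"
  proof
    fix p assume "p \<in> inversions A C"
    then obtain y z where p: "p = (y, z)" "y \<in> set A" "z \<in> set A" "y \<noteq> z"
      "pos A y < pos A z" "pos C z < pos C y"
      by (auto simp: inversions_def)
    then have "pos B y < pos B z \<or> pos B z < pos B y"
      using assms(1) pos_less_or_greater[of y B z] by auto
    then show "p \<in> inversions A B \<union> inversions B C"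
      using p assms by (auto simp: inversions_def)
  qed
  then have "ninv A C \<le> card (inversions A B \<union> inversions B C)"
    unfolding ninv_def by (intro card_mono) auto
  also have "\<dots> \<le> ninv A B + ninv B C" unfolding ninv_def by (rule card_Un_le)
  finally show ?thesis .
qed

lemma ninv_between:
  assumes "set T = set N" "set M = set N"
    and common_order: "\<And>y z. y \<in> set N \<Longrightarrow> z \<in> set N \<Longrightarrow> pos N y < pos N z \<Longrightarrow>
      pos M y < pos M z \<Longrightarrow> pos T y < pos T z"
  shows "ninv N T + ninv T M \<le> ninv N M"
proof -
  have "inversions N T \<subseteq> inversions N M"
  proof
    fix p assume "p \<in> inversions N T"
    then obtain y z where p: "p = (y, z)" "y \<in> set N" "z \<in> set N" "y \<noteq> z"
      "pos N y < pos N z" "pos T z < pos T y"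
      by (auto simp: inversions_def)
    then have "pos M z < pos M y"
      using assms(2) pos_less_or_greater[of y M z] common_order[of y z] by auto
    then show "p \<in> inversions N M" using p by (auto simp: inversions_def)
  qed
  moreover have "inversions T M \<subseteq> inversions N M"
  proof
    fix p assume "p \<in> inversions T M"
    then obtain y z where p: "p = (y, z)" "y \<in> set N" "z \<in> set N" "y \<noteq> z"
      "pos T y < pos T z" "pos M z < pos M y"
      using assms(1) by (auto simp: inversions_def)
    then have "pos N y < pos N z"
      using pos_less_or_greater[of y N z] common_order[of z y] by auto
    then show "p \<in> inversions N M" using p by (auto simp: inversions_def)
  qed
  moreover have "inversions N T \<inter> inversions T M = {}"
    using assms(1) by (auto simp: inversions_def)
  ultimately have "card (inversions N T) + card (inversions T M) \<le> card (inversions N M)"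
    by (subst card_Un_disjoint[symmetric]) (auto intro: card_mono)
  then show ?thesis unfolding ninv_def .
qed

lemma pos_le_ninv_add_pos:
  assumes "distinct N" "distinct M" "set M = set N" "x \<in> set N"
  shows "pos N x \<le> ninv N M + pos M x"
proof -
  have "{y \<in> set N. pos N y < pos N x} \<subseteq> {y \<in> set M. pos M y < pos M x} \<union> fst ` inversions N M"
  proof
    fix y assume y: "y \<in> {y \<in> set N. pos N y < pos N x}"
    then have "pos M y < pos M x \<or> (y, x) \<in> inversions N M"
      using assms pos_less_or_greater[of y M x] by (auto simp: inversions_def)
    then show "y \<in> {y \<in> set M. pos M y < pos M x} \<union> fst ` inversions N M"
      using y assms(3) by (force intro: image_eqI[where x="(y, x)"])
  qed
  then have "card {y \<in> set N. pos N y < pos N x}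
      \<le> card ({y \<in> set M. pos M y < pos M x} \<union> fst ` inversions N M)"
    by (intro card_mono) auto
  then have "pos N x \<le> card ({y \<in> set M. pos M y < pos M x} \<union> fst ` inversions N M)"
    using card_pos_less[OF assms(1,4)] by simp
  also have "\<dots> \<le> card {y \<in> set M. pos M y < pos M x} + card (fst ` inversions N M)"
    by (rule card_Un_le)
  also have "\<dots> = pos M x + card (fst ` inversions N M)"
    using card_pos_less[OF assms(2)] assms(3,4) by simp
  also have "\<dots> \<le> pos M x + ninv N M"
    unfolding ninv_def by (simp add: card_image_le)
  finally show ?thesis by simp
qed

lemma length_swap_adj [simp]: "length (swap_adj i K) = length K"
  by (simp add: swap_adj_def)

lemma set_swap_adj [simp]: "Suc i < length K \<Longrightarrow> set (swap_adj i K) = set K"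
  by (simp add: swap_adj_def)

lemma distinct_swap_adj [simp]: "Suc i < length K \<Longrightarrow> distinct (swap_adj i K) = distinct K"
  by (simp add: swap_adj_def)

lemma swap_adj_append: "swap_adj (length us) (us @ a # b # vs) = us @ b # a # vs"
  by (simp add: swap_adj_def list_update_append nth_append)

lemma pos_swap_adj:
  assumes "distinct K" "Suc i < length K" "v \<in> set K"
  shows "pos (swap_adj i K) v = (if v = K ! i then Suc i else if v = K ! Suc i then i else pos K v)"
proof -
  define k where "k = (if v = K ! i then Suc i else if v = K ! Suc i then i else pos K v)"
  have "k < length K" "swap_adj i K ! k = v"
    using assms pos_less_length[OF assms(3)] nth_pos[OF assms(3)]
    by (auto simp: k_def swap_adj_def nth_list_update)
  then show ?thesis using assms(1,2) pos_nth[of "swap_adj i K" k] unfolding k_def by auto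
qed

lemma eq_nth_iff_pos_eq: "distinct K \<Longrightarrow> i < length K \<Longrightarrow> y \<in> set K \<Longrightarrow> y = K ! i \<longleftrightarrow> pos K y = i"
  by (metis nth_pos pos_nth)

lemma pos_swap_adj_less_iff:
  assumes "distinct K" "Suc i < length K" "y \<in> set K" "z \<in> set K"
  shows "pos (swap_adj i K) y < pos (swap_adj i K) z \<longleftrightarrow>
    (if {y, z} = {K ! i, K ! Suc i} then pos K z < pos K y else pos K y < pos K z)"
proof -
  have "y = K ! i \<longleftrightarrow> pos K y = i" "y = K ! Suc i \<longleftrightarrow> pos K y = Suc i"
    "z = K ! i \<longleftrightarrow> pos K z = i" "z = K ! Suc i \<longleftrightarrow> pos K z = Suc i"
    using assms by (simp_all add: eq_nth_iff_pos_eq)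
  then show ?thesis
    using assms pos_swap_adj[OF assms(1,2)] by (auto simp: doubleton_eq_iff)
qed

lemma inversions_swap_adj:
  assumes "distinct K" "Suc i < length K"
  shows "inversions (swap_adj i K) M \<subseteq> inversions K M - {(K ! i, K ! Suc i)} \<union> {(K ! Suc i, K ! i)}"
proof
  fix p assume "p \<in> inversions (swap_adj i K) M"
  then obtain y z where p: "p = (y, z)" "y \<in> set K" "z \<in> set K"
    "pos (swap_adj i K) y < pos (swap_adj i K) z" "pos M z < pos M y"
    using assms(2) by (auto simp: inversions_def)
  show "p \<in> inversions K M - {(K ! i, K ! Suc i)} \<union> {(K ! Suc i, K ! i)}"
    using p pos_swap_adj_less_iff[OF assms p(2,3)] assms pos_nth[OF assms(1) Suc_lessD[OF assms(2)]]
    by (auto simp: inversions_def doubleton_eq_iff split: if_splits)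
qed

lemma ninv_swap_adj_le: 
  assumes "distinct K" "Suc i < length K"
  shows "ninv K (swap_adj i K) \<le> 1"
proof -
  have "inversions (swap_adj i K) K \<subseteq> {(K ! Suc i, K ! i)}"
    using inversions_swap_adj[OF assms, of K] by simp
  then have "ninv (swap_adj i K) K \<le> 1"
    unfolding ninv_def using card_mono[of "{(K ! Suc i, K ! i)}"] by fastforce
  then show ?thesis using ninv_commute[of "swap_adj i K" K] assms(2) by simp
qed

lemma swaps_Nil [simp]: "swaps [] K = K"
  by (simp add: swaps_def)

lemma swaps_Cons [simp]: "swaps (i # ps) K = swaps ps (swap_adj i K)"
  by (simp add: swaps_def)

lemma swaps_append: "swaps (ps @ qs) K = swaps qs (swaps ps K)"
  by (simp add: swaps_def)

lemma length_swaps [simp]: "length (swaps ps K) = length K"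
  by (induction ps arbitrary: K) auto

lemma set_swaps [simp]: "\<forall>i\<in>set ps. Suc i < length K \<Longrightarrow> set (swaps ps K) = set K"
  by (induction ps arbitrary: K) auto

lemma distinct_swaps [simp]: "\<forall>i\<in>set ps. Suc i < length K \<Longrightarrow> distinct (swaps ps K) = distinct K"
  by (induction ps arbitrary: K) auto

lemma ninv_swaps_le:
  assumes "distinct K" "\<forall>i\<in>set ps. Suc i < length K"
  shows "ninv K (swaps ps K) \<le> length ps"
  using assms
proof (induction ps arbitrary: K)
  case Nil
  then show ?case by (simp add: ninv_def)
next
  case (Cons i ps)
  let ?K = "swap_adj i K"
  have "ninv K (swaps ps ?K) \<le> ninv K ?K + ninv ?K (swaps ps ?K)"
    using Cons.prems by (intro ninv_triangle) auto
  also have "\<dots> \<le> 1 + length ps"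
    using Cons ninv_swap_adj_le[of K i] by (intro add_mono) auto
  finally show ?case by simp
qed

lemma exists_adjacent_inversion:
  assumes "distinct K" "distinct M" "set M = set K" "K \<noteq> M"
  shows "\<exists>i. Suc i < length K \<and> pos M (K ! Suc i) < pos M (K ! i)"
proof (rule ccontr)
  assume "\<not> ?thesis"
  then have "\<forall>i. Suc i < length K \<longrightarrow> pos M (K ! i) \<le> pos M (K ! Suc i)"
    by (meson not_less)
  then have sorted: "sorted (map (pos M) K)"
    by (simp add: sorted_iff_nth_Suc)
  have inj: "inj_on (pos M) (set M)"
    by (intro inj_onI) (simp add: pos_eq_iff)
  then have "distinct (map (pos M) K)"
    using assms by (simp add: distinct_map)
  moreover have "map (pos M) M = [0..<length M]"
    using assms(2) by (intro nth_equalityI) auto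
  moreover from this have "set (map (pos M) K) = set [0..<length M]"
    using assms(3) by (metis set_map)
  ultimately have "map (pos M) K = map (pos M) M"
    using sorted_distinct_set_unique[OF sorted] by simp
  moreover have "inj_on (pos M) (set K \<union> set M)"
    using inj assms(3) by simp
  ultimately have "K = M" by (simp add: inj_on_map_eq_map)
  then show False using assms(4) by simp
qed

lemma ex_swaps_le_ninv:
  assumes "distinct K" "distinct M" "set M = set K"
  shows "\<exists>ps. swaps ps K = M \<and> length ps \<le> ninv K M \<and> (\<forall>i\<in>set ps. Suc i < length K)"
  using assms
proof (induction "ninv K M" arbitrary: K rule: less_induct)
  case less
  show ?case
  proof (cases "K = M")
    case True
    then show ?thesis by (intro exI[of _ "[]"]) simp
  next
    case False
    obtain i where i: "Suc i < length K" "pos M (K ! Suc i) < pos M (K ! i)"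
      using exists_adjacent_inversion[OF less.prems False] by blast
    let ?K = "swap_adj i K"
    define a b where "a = K ! i" and "b = K ! Suc i"
    have "inversions ?K M \<subset> inversions K M"
    proof -
      have "inversions ?K M \<subseteq> inversions K M - {(a, b)} \<union> {(b, a)}"
        unfolding a_def b_def by (rule inversions_swap_adj[OF less.prems(1) i(1)])
      moreover have "(b, a) \<notin> inversions ?K M"
        using i by (auto simp: inversions_def a_def b_def)
      moreover have "(a, b) \<in> inversions K M"
        using less.prems(1) i by (auto simp: inversions_def a_def b_def)
      ultimately show ?thesis by blast
    qed
    then have "ninv ?K M < ninv K M"
      unfolding ninv_def by (intro psubset_card_mono) auto
    moreover have "distinct ?K" "set M = set ?K"
      using less.prems i(1) by simp_all
    ultimately obtain ps where "swaps ps ?K = M" "length ps \<le> ninv ?K M" "\<forall>j\<in>set ps. Suc j < length K"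
      using less.hyps[of ?K] less.prems(2) by auto
    then show ?thesis
      using i(1) \<open>ninv ?K M < ninv K M\<close> by (intro exI[of _ "i # ps"]) auto
  qed
qed

lemma move_to_append_Cons:
  "x \<notin> set us \<Longrightarrow> j \<le> length us \<Longrightarrow> move_to j x (us @ x # vs) = take j us @ x # drop j us @ vs"
  by (simp add: move_to_def remove1_append)

lemma move_to_append_Cons_eq_swaps:
  assumes "x \<notin> set us" "j \<le> length us"
  shows "move_to j x (us @ x # vs) = swaps (rev [j..<length us]) (us @ x # vs)"
  using assms(2)
proof (induction j rule: inc_induct)
  case base
  then show ?case using assms(1) by (simp add: move_to_append_Cons)
next
  case (step j)
  have "swaps (rev [j..<length us]) (us @ x # vs) = swap_adj j (move_to (Suc j) x (us @ x # vs))"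
    using step by (simp add: upt_conv_Cons swaps_append)
  also have "\<dots> = swap_adj (length (take j us)) (take j us @ us ! j # x # drop (Suc j) us @ vs)"
    using step assms(1) by (simp add: move_to_append_Cons take_Suc_conv_app_nth)
  also have "\<dots> = move_to j x (us @ x # vs)"
    using step assms(1) by (simp only: swap_adj_append) (simp add: move_to_append_Cons Cons_nth_drop_Suc)
  finally show ?case by simp
qed

lemma move_to_eq_swaps:
  assumes "x \<in> set K" "j \<le> pos K x"
  shows "move_to j x K = swaps (rev [j..<pos K x]) K"
proof -
  obtain us vs where K: "K = us @ x # vs" "x \<notin> set us"
    using split_list_first[OF assms(1)] by blast
  then show ?thesis
    using move_to_append_Cons_eq_swaps assms(2) by (simp add: pos_append_Cons)
qed

lemma pos_move_to:
  assumes "x \<in> set K" "j \<le> pos K x"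
  shows "pos (move_to j x K) x = j"
proof -
  obtain us vs where K: "K = us @ x # vs" "x \<notin> set us"
    using split_list_first[OF assms(1)] by blast
  then have "x \<notin> set (take j us)" by (meson in_set_takeD)
  then show ?thesis
    using K assms(2) by (simp add: pos_append_Cons move_to_append_Cons)
qed

lemma step_state_and_cost:
  assumes "distinct N" "x \<in> set N" "valid_action N x a"
  shows "distinct (step_state N x a)" "set (step_state N x a) = set N"
    "ninv N (step_state N x a) + pos (step_state N x a) x + 1 \<le> step_cost N x a"
proof -
  obtain ps j where a: "a = (ps, j)" by (cases a)
  define K where "K = swaps ps N"
  have ps: "\<forall>i\<in>set ps. Suc i < length N" and j: "j \<le> pos K x"
    using assms(3) by (auto simp: valid_action_def a K_def)
  have x: "x \<in> set K" using ps assms(2) by (simp add: K_def)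
  define qs where "qs = ps @ rev [j..<pos K x]"
  have qs: "\<forall>i\<in>set qs. Suc i < length N"
    using ps pos_less_length[OF x] by (auto simp: qs_def K_def)
  have T: "step_state N x a = swaps qs N"
    using move_to_eq_swaps[OF x j] by (simp add: step_state_def a qs_def swaps_append K_def)
  show "distinct (step_state N x a)" "set (step_state N x a) = set N"
    using T qs assms(1) by simp_all
  have "ninv N (step_state N x a) \<le> length ps + (pos K x - j)"
    using T ninv_swaps_le[OF assms(1) qs] by (simp add: qs_def)
  moreover have "pos (step_state N x a) x = j"
    using pos_move_to[OF x j] by (simp add: step_state_def a K_def)
  ultimately show "ninv N (step_state N x a) + pos (step_state N x a) x + 1 \<le> step_cost N x a"
    using j by (simp add: step_cost_def a K_def)
qed

lemma pos_sort_key_less_iff: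
  fixes f :: "'a \<Rightarrow> 'b::linorder"
  assumes "distinct N" "inj_on f (set N)" "y \<in> set N" "z \<in> set N"
  shows "pos (sort_key f N) y < pos (sort_key f N) z \<longleftrightarrow> f y < f z"
proof -
  let ?T = "sort_key f N"
  have T: "distinct ?T" "set ?T = set N" using assms(1) by simp_all
  have "sorted_wrt (<) (map f ?T)"
    using T assms(2) by (simp add: strict_sorted_iff distinct_map)
  then have mono: "f u < f v" if "u \<in> set N" "v \<in> set N" "pos ?T u < pos ?T v" for u v
    using that sorted_wrt_nth_less[of "(<)" "map f ?T" "pos ?T u" "pos ?T v"] pos_less_length[of _ ?T] T(2)
    by simp
  show ?thesis
  proof
    assume "f y < f z"
    then have "y \<noteq> z" "\<not> pos ?T z < pos ?T y"
      using mono[of z y] assms(3,4) by auto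
    then show "pos ?T y < pos ?T z"
      using pos_less_or_greater[of y ?T z] T(2) assms(3,4) by auto
  qed (use mono assms(3,4) in blast)
qed

(* Items ahead of x stay ahead of it (class 0) or move behind it (class 2) according to b; x has
   class 1 and the items behind it class 3. Ties are broken by the old position. *)
definition rearrange_key :: "'a list \<Rightarrow> 'a \<Rightarrow> ('a \<Rightarrow> bool) \<Rightarrow> 'a \<Rightarrow> nat \<times> nat" where
  "rearrange_key N x b v =
     ((if pos N v < pos N x then (if b v then 2 else 0) else if v = x then 1 else 3), pos N v)"

definition rearrange :: "'a list \<Rightarrow> 'a \<Rightarrow> ('a \<Rightarrow> bool) \<Rightarrow> 'a list" where
  "rearrange N x b = sort_key (rearrange_key N x b) N"

lemma distinct_rearrange [simp]: "distinct N \<Longrightarrow> distinct (rearrange N x b)"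
  by (simp add: rearrange_def)

lemma set_rearrange [simp]: "set (rearrange N x b) = set N"
  by (simp add: rearrange_def)

lemma pos_rearrange_less_iff:
  assumes "distinct N" "y \<in> set N" "z \<in> set N"
  shows "pos (rearrange N x b) y < pos (rearrange N x b) z \<longleftrightarrow>
    rearrange_key N x b y < rearrange_key N x b z"
proof -
  have "inj_on (rearrange_key N x b) (set N)"
  proof (rule inj_onI)
    fix u v assume "u \<in> set N" "v \<in> set N" "rearrange_key N x b u = rearrange_key N x b v"
    then show "u = v" using pos_eq_iff[of u N v] by (simp add: rearrange_key_def)
  qed
  then show ?thesis
    unfolding rearrange_def by (rule pos_sort_key_less_iff[OF assms(1) _ assms(2,3)])
qed

lemma rearrange_keeps_common_order:
  assumes "distinct N" "x \<in> set N"
    and b: "\<forall>v\<in>set N. pos N v < pos N x \<longrightarrow> (b v \<longleftrightarrow> pos M x < pos M v)"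
    and "y \<in> set N" "z \<in> set N" "pos N y < pos N z" "pos M y < pos M z"
  shows "pos (rearrange N x b) y < pos (rearrange N x b) z"
proof -
  have "z \<noteq> x" if "y \<noteq> x" "pos N y < pos N x" "b y"
    using that b assms(4,7) by auto
  moreover have "pos N x < pos N z" if "\<not> pos N y < pos N x"
    using that assms(6) pos_eq_iff[OF assms(4,2)] by (cases "y = x") auto
  ultimately show ?thesis
    using assms b pos_rearrange_less_iff[OF assms(1,4,5)]
    by (auto simp: rearrange_key_def less_prod_def)
qed

lemma pos_rearrange_le:
  assumes "distinct N" "distinct M" "set M = set N" "x \<in> set N"
    and b: "\<forall>v\<in>set N. pos N v < pos N x \<longrightarrow> (b v \<longleftrightarrow> pos M x < pos M v)"
  shows "pos (rearrange N x b) x \<le> pos M x"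
proof -
  let ?T = "rearrange N x b"
  have "pos M y < pos M x" if "y \<in> set N" "pos ?T y < pos ?T x" for y
  proof -
    have "pos N y < pos N x" "\<not> b y" "y \<noteq> x"
      using that pos_rearrange_less_iff[OF assms(1) that(1) assms(4)]
      by (auto simp: rearrange_key_def less_prod_def split: if_splits)
    then show ?thesis
      using b that(1) pos_less_or_greater[of y M x] assms(3,4) by auto
  qed
  then have "card {y \<in> set ?T. pos ?T y < pos ?T x} \<le> card {y \<in> set M. pos M y < pos M x}"
    using assms(3) by (intro card_mono) auto
  then show ?thesis
    using card_pos_less[of ?T x] card_pos_less[OF assms(2)] assms by simp
qed

definition swaps_to :: "'a list \<Rightarrow> 'a list \<Rightarrow> nat list" where
  "swaps_to K M = (SOME ps. swaps ps K = M \<and> length ps \<le> ninv K M \<and> (\<forall>i\<in>set ps. Suc i < length K))"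

lemma swaps_to_spec:
  assumes "distinct K" "distinct M" "set M = set K"
  shows "swaps (swaps_to K M) K = M" "length (swaps_to K M) \<le> ninv K M"
    "\<forall>i\<in>set (swaps_to K M). Suc i < length K"
  using someI_ex[OF ex_swaps_le_ninv[OF assms]] unfolding swaps_to_def by blast+

(* Bit i of the tape decides the fate of the item at position i ahead of the request; the
   p bits consumed by a request at position p are then dropped from the tape. *)
definition advised_list :: "'a list \<Rightarrow> 'a \<Rightarrow> (nat \<Rightarrow> bool) \<Rightarrow> 'a list" where
  "advised_list N x w = rearrange N x (\<lambda>v. w (pos N v))"

definition advised_action :: "'a list \<Rightarrow> 'a \<Rightarrow> (nat \<Rightarrow> bool) \<Rightarrow> action" where
  "advised_action N x w = (swaps_to N (advised_list N x w), pos (advised_list N x w) x)"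

fun advised_run :: "'a list \<Rightarrow> 'a list \<Rightarrow> (nat \<Rightarrow> bool) \<Rightarrow> action list" where
  "advised_run N [] w = []"
| "advised_run N (x # xs) w =
     advised_action N x w # advised_run (advised_list N x w) xs (\<lambda>i. w (i + pos N x))"

fun advised_lists :: "'a list \<Rightarrow> 'a list \<Rightarrow> (nat \<Rightarrow> bool) \<Rightarrow> 'a list list" where
  "advised_lists N [] w = []"
| "advised_lists N (x # xs) w =
     advised_list N x w # advised_lists (advised_list N x w) xs (\<lambda>i. w (i + pos N x))"

fun advice_used :: "'a list \<Rightarrow> 'a list \<Rightarrow> (nat \<Rightarrow> bool) \<Rightarrow> nat" where
  "advice_used N [] w = 0"
| "advice_used N (x # xs) w = pos N x + advice_used (advised_list N x w) xs (\<lambda>i. w (i + pos N x))"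

(* Recomputing the advised run on the requests revealed so far makes the algorithm online. *)
definition advice_alg :: "'a advice_alg" where
  "advice_alg L \<sigma> w = last (advised_run L \<sigma> w)"

(* The cost of passing through the lists Ms when every transition is charged by its number of
   inversions: a lower bound for any run through Ms, and an upper bound for the advised run. *)
fun path_cost :: "'a list \<Rightarrow> 'a list \<Rightarrow> 'a list list \<Rightarrow> nat" where
  "path_cost N (x # xs) (M # Ms) = ninv N M + pos M x + 1 + path_cost M xs Ms"
| "path_cost N _ _ = 0"

fun run_lists :: "'a list \<Rightarrow> 'a list \<Rightarrow> action list \<Rightarrow> 'a list list" where
  "run_lists N (x # xs) (a # as) = step_state N x a # run_lists (step_state N x a) xs as"
| "run_lists N _ _ = []"

lemma distinct_advised_list [simp]: "distinct N \<Longrightarrow> distinct (advised_list N x w)"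
  by (simp add: advised_list_def)

lemma set_advised_list [simp]: "set (advised_list N x w) = set N"
  by (simp add: advised_list_def)

lemma advised_action_spec:
  assumes "distinct N" "x \<in> set N"
  shows "valid_action N x (advised_action N x w)"
    "step_state N x (advised_action N x w) = advised_list N x w"
    "step_cost N x (advised_action N x w) \<le> ninv N (advised_list N x w) + pos (advised_list N x w) x + 1"
proof -
  let ?T = "advised_list N x w"
  have T: "distinct ?T" "set ?T = set N" "x \<in> set ?T" using assms by simp_all
  note ps = swaps_to_spec[OF assms(1) T(1,2)]
  show "valid_action N x (advised_action N x w)"
    using ps by (simp add: valid_action_def advised_action_def)
  show "step_state N x (advised_action N x w) = ?T"
    using ps move_to_eq_swaps[OF T(3) order_refl] by (simp add: step_state_def advised_action_def)
  show "step_cost N x (advised_action N x w) \<le> ninv N ?T + pos ?T x + 1"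
    using ps by (simp add: step_cost_def advised_action_def)
qed

lemma advised_run_valid_cost:
  assumes "distinct N" "set \<sigma> \<subseteq> set N"
  shows "valid_run N \<sigma> (advised_run N \<sigma> w)
    \<and> run_cost N \<sigma> (advised_run N \<sigma> w) \<le> path_cost N \<sigma> (advised_lists N \<sigma> w)
    \<and> advice_used N \<sigma> w + length \<sigma> \<le> run_cost N \<sigma> (advised_run N \<sigma> w)"
  using assms
proof (induction \<sigma> arbitrary: N w)
  case (Cons x xs)
  let ?T = "advised_list N x w" and ?w = "\<lambda>i. w (i + pos N x)"
  have x: "x \<in> set N" using Cons.prems by simp
  have IH: "valid_run ?T xs (advised_run ?T xs ?w)
    \<and> run_cost ?T xs (advised_run ?T xs ?w) \<le> path_cost ?T xs (advised_lists ?T xs ?w)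
    \<and> advice_used ?T xs ?w + length xs \<le> run_cost ?T xs (advised_run ?T xs ?w)"
    using Cons.IH[of ?T ?w] Cons.prems by simp
  note a = advised_action_spec[OF Cons.prems(1) x, of w]
  have "ninv N ?T + pos ?T x + 1 \<le> step_cost N x (advised_action N x w)"
    using step_state_and_cost(3)[OF Cons.prems(1) x a(1)] a(2) by simp
  moreover have "pos N x \<le> ninv N ?T + pos ?T x"
    using pos_le_ninv_add_pos[of N ?T x] Cons.prems(1) x by simp
  ultimately show ?case
    using IH a by simp
qed simp

lemma advised_run_take: "take k (advised_run N \<sigma> w) = advised_run N (take k \<sigma>) w"
  by (induction \<sigma> arbitrary: N w k) (auto simp: take_Cons split: nat.split)

lemma length_advised_run [simp]: "length (advised_run N \<sigma> w) = length \<sigma>"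
  by (induction \<sigma> arbitrary: N w) auto

lemma alg_actions_advice_alg: "alg_actions advice_alg L \<sigma> w = advised_run L \<sigma> w"
proof (rule nth_equalityI)
  fix t assume "t < length (alg_actions advice_alg L \<sigma> w)"
  then have "t < length \<sigma>" by (simp add: alg_actions_def)
  then show "alg_actions advice_alg L \<sigma> w ! t = advised_run L \<sigma> w ! t"
    by (simp add: alg_actions_def advice_alg_def flip: advised_run_take)
      (simp add: take_Suc_conv_app_nth)
qed (simp add: alg_actions_def)

lemma advised_list_cong:
  "\<forall>i<pos N x. w' i = w i \<Longrightarrow> advised_list N x w' = advised_list N x w"
  by (auto simp: advised_list_def rearrange_def rearrange_key_def intro!: arg_cong2[where f=sort_key])

lemma advised_run_cong:
  "\<forall>i<advice_used N \<sigma> w. w' i = w i \<Longrightarrow> advised_run N \<sigma> w' = advised_run N \<sigma> w"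
proof (induction \<sigma> arbitrary: N w w')
  case (Cons x xs)
  have "advised_list N x w' = advised_list N x w"
    using Cons.prems by (intro advised_list_cong) auto
  moreover have "advised_run (advised_list N x w) xs (\<lambda>i. w' (i + pos N x))
      = advised_run (advised_list N x w) xs (\<lambda>i. w (i + pos N x))"
    using Cons.prems by (intro Cons.IH) auto
  ultimately show ?case by (simp add: advised_action_def)
qed simp

lemma reads_at_most_advice_alg:
  "advice_used L \<sigma> w \<le> b \<Longrightarrow> reads_at_most advice_alg L \<sigma> w b"
  unfolding reads_at_most_def alg_actions_advice_alg by (auto intro: advised_run_cong)

lemma run_lists_props:
  assumes "valid_run N \<sigma> as" "distinct N" "set \<sigma> \<subseteq> set N"
  shows "length (run_lists N \<sigma> as) = length \<sigma> \<and> (\<forall>M\<in>set (run_lists N \<sigma> as). distinct M \<and> set M = set N)"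
  using assms
proof (induction N \<sigma> as rule: valid_run.induct)
  case (2 N x xs a as)
  then have x: "x \<in> set N" and a: "valid_action N x a" by simp_all
  note step = step_state_and_cost(1,2)[OF \<open>distinct N\<close> x a]
  then have "set xs \<subseteq> set (step_state N x a)" using "2.prems"(3) by simp
  then show ?case using 2 step by simp
qed simp_all

lemma path_cost_run_lists_le:
  assumes "valid_run N \<sigma> as" "distinct N" "set \<sigma> \<subseteq> set N"
  shows "path_cost N \<sigma> (run_lists N \<sigma> as) \<le> run_cost N \<sigma> as"
  using assms
proof (induction N \<sigma> as rule: valid_run.induct)
  case (2 N x xs a as)
  then have x: "x \<in> set N" and a: "valid_action N x a" by simp_all
  note step = step_state_and_cost[OF \<open>distinct N\<close> x a]
  then have "set xs \<subseteq> set (step_state N x a)" using "2.prems"(3) by simp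
  then show ?case using 2 step by simp
qed simp_all

lemma path_cost_change_start:
  assumes "set B = set N" "set M = set N" "\<forall>M'\<in>set Ms. set M' = set N"
  shows "path_cost B xs Ms \<le> ninv B M + path_cost M xs Ms"
proof (cases "xs = [] \<or> Ms = []")
  case False
  then obtain x xs' M' Ms' where "xs = x # xs'" "Ms = M' # Ms'"
    by (auto simp: neq_Nil_conv)
  moreover have "ninv B M' \<le> ninv B M + ninv M M'"
    using ninv_triangle[of M B M'] assms \<open>Ms = M' # Ms'\<close> by simp
  ultimately show ?thesis by simp
qed auto

lemma ex_advice_path_cost_le:
  assumes "distinct N" "set \<sigma> \<subseteq> set N" "length Ms = length \<sigma>"
    "\<forall>M\<in>set Ms. distinct M \<and> set M = set N"
  shows "\<exists>w. path_cost N \<sigma> (advised_lists N \<sigma> w) \<le> path_cost N \<sigma> Ms"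
  using assms
proof (induction \<sigma> arbitrary: N Ms)
  case (Cons x xs)
  then obtain M Ms' where Ms: "Ms = M # Ms'" by (cases Ms) auto
  have x: "x \<in> set N" using Cons.prems by simp
  have M: "distinct M" "set M = set N" using Cons.prems(4) Ms by auto
  define bit where "bit i \<longleftrightarrow> pos M x < pos M (N ! i)" for i
  define T where "T = rearrange N x (\<lambda>v. bit (pos N v))"
  have b: "\<forall>v\<in>set N. pos N v < pos N x \<longrightarrow> (bit (pos N v) \<longleftrightarrow> pos M x < pos M v)"
    by (simp add: bit_def)
  have T: "distinct T" "set T = set N" using Cons.prems(1) by (simp_all add: T_def)
  have "ninv N T + ninv T M \<le> ninv N M"
    using T(2) M(2) rearrange_keeps_common_order[OF Cons.prems(1) x b]
    by (intro ninv_between) (simp_all add: T_def)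
  moreover have "pos T x \<le> pos M x"
    unfolding T_def by (rule pos_rearrange_le[OF Cons.prems(1) M x b])
  moreover obtain w' where w': "path_cost T xs (advised_lists T xs w') \<le> path_cost T xs Ms'"
    using Cons.IH[of T Ms'] T Cons.prems Ms by auto
  moreover have "path_cost T xs Ms' \<le> ninv T M + path_cost M xs Ms'"
    using path_cost_change_start[OF T(2) M(2)] Cons.prems(4) Ms by auto
  moreover define w where "w i = (if i < pos N x then bit i else w' (i - pos N x))" for i
  moreover have "advised_list N x w = T"
    using advised_list_cong[of N x w bit] by (simp add: w_def advised_list_def T_def)
  moreover have "(\<lambda>i. w (i + pos N x)) = w'"
    by (simp add: w_def)
  ultimately have "path_cost N (x # xs) (advised_lists N (x # xs) w) \<le> path_cost N (x # xs) Ms"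
    using Ms by simp
  then show ?case by blast
qed simp

lemma OPT_le: "valid_run L \<sigma> as \<Longrightarrow> OPT L \<sigma> \<le> run_cost L \<sigma> as"
  unfolding OPT_def by (rule Least_le) blast

lemma OPT_attained:
  "valid_run L \<sigma> as \<Longrightarrow> \<exists>as'. valid_run L \<sigma> as' \<and> run_cost L \<sigma> as' = OPT L \<sigma>"
  unfolding OPT_def by (rule LeastI_ex) blast

theorem theorem1:
  "\<exists>A :: 'a advice_alg. \<forall>L \<sigma>. distinct L \<and> set \<sigma> \<subseteq> set L \<longrightarrow>
     (\<exists>w. valid_run L \<sigma> (alg_actions A L \<sigma> w)
          \<and> run_cost L \<sigma> (alg_actions A L \<sigma> w) = OPT L \<sigma>
          \<and> reads_at_most A L \<sigma> w (OPT L \<sigma> - length \<sigma>))"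
proof (intro exI[of _ advice_alg] allI impI)
  fix L \<sigma> :: "'a list"
  assume "distinct L \<and> set \<sigma> \<subseteq> set L"
  then have L: "distinct L" "set \<sigma> \<subseteq> set L" by simp_all
  obtain as where opt: "valid_run L \<sigma> as" "run_cost L \<sigma> as = OPT L \<sigma>"
    using OPT_attained advised_run_valid_cost[OF L] by blast
  obtain w where w: "path_cost L \<sigma> (advised_lists L \<sigma> w) \<le> path_cost L \<sigma> (run_lists L \<sigma> as)"
    using ex_advice_path_cost_le[OF L] run_lists_props[OF opt(1) L] by blast
  have run: "valid_run L \<sigma> (advised_run L \<sigma> w)"
    "run_cost L \<sigma> (advised_run L \<sigma> w) \<le> path_cost L \<sigma> (advised_lists L \<sigma> w)"
    "advice_used L \<sigma> w + length \<sigma> \<le> run_cost L \<sigma> (advised_run L \<sigma> w)"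
    using advised_run_valid_cost[OF L] by simp_all
  have "run_cost L \<sigma> (advised_run L \<sigma> w) = OPT L \<sigma>"
    using OPT_le[OF run(1)] run(2) w path_cost_run_lists_le[OF opt(1) L] opt(2) by linarith
  then show "\<exists>w. valid_run L \<sigma> (alg_actions advice_alg L \<sigma> w)
      \<and> run_cost L \<sigma> (alg_actions advice_alg L \<sigma> w) = OPT L \<sigma>
      \<and> reads_at_most advice_alg L \<sigma> w (OPT L \<sigma> - length \<sigma>)"
    using run reads_at_most_advice_alg[of L \<sigma> w] unfolding alg_actions_advice_alg by auto
qed

end
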